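(* Let $U\in\mathcal{B}(\ell^2(\mathbb{N}))$ with $\|U\|\le1$. Let $\Omega=\Omega_1\cup\dots\cup\Omega_r$ be an $(\mathbf{N},\mathbf{m})$-multilevel Bernoulli sampling scheme with $1\le N_1<\dots<N_r$, let $M_1<\dots<M_r$, $\mathbf{s}\in\mathbb{N}^r$, $\Delta=\cup_k\Delta_k$ with $\Delta_k\subseteq\{M_{k-1}+1,\dots,M_k\}$, $|\Delta_k|=s_k$, let $q_k=m_k/(N_k-N_{k-1})$, $D=\sum_kq_k^{-1}P_{\Omega_k}$, and let $M\ge M_r$ be an integer. Then for any $t\in(0,1)$ and $\gamma\in(0,1)$, $$\mathbb{P}\Big(\max_{i\in\{1,\dots,M\}\cap\Delta^c}\|P_{\{i\}}U^*DUP_{\{i\}}\|\ge1+t\Big)\le\gamma$$ provided that $$\frac{t^2}{4}\ge\log\Big(\frac{2M}{\gamma}\Big)\cdot\max_{1\le k\le r}\Big\{\Big(\frac{N_k-N_{k-1}}{m_k}-1\Big)\mu_{\mathbf{N},\mathbf{M}}(k,l)\Big\}$$ for all $l=1,\dots,r$ when $M=M_r$, and for all $l\in\{1,\dots,r-1,\infty\}$ when $M>M_r$. In addition, if $m_k=N_k-N_{k-1}$ for each $k$, then $\mathbb{P}(\|P_{\{i\}}U^*DUP_{\{i\}}\|\ge1+t)=0$ for all $i\in\mathbb{N}$.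
   Context: $N_0=M_0=0$. Multilevel Bernoulli scheme: $\Omega_k=\{j\in\{N_{k-1}+1,\dots,N_k\}:\delta_j=1\}$ with independent Bernoulli $\delta_j$, $\mathbb{P}(\delta_j=1)=q_k$. $P^a_b$ projects onto $\mathrm{span}\{e_{a+1},\dots,e_b\}$, $P_\Gamma$ onto $\mathrm{span}\{e_j:j\in\Gamma\}$, $P_K^\perp=I-P_K$. $\mu(A)=\sup|a_{ij}|^2$; $\mu_{\mathbf{N},\mathbf{M}}(k,l)=\sqrt{\mu(P^{N_{k-1}}_{N_k}UP^{M_{l-1}}_{M_l})\mu(P^{N_{k-1}}_{N_k}U)}$ and $\mu_{\mathbf{N},\mathbf{M}}(k,\infty)=\sqrt{\mu(P^{N_{k-1}}_{N_k}UP^\perp_{M_{r-1}})\mu(P^{N_{k-1}}_{N_k}U)}$. *)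

theory Defs
  imports "HOL-Probability.Probability"
begin

text \<open>The Hilbert space l2(N), N = {1,2,...}, is modelled by sequences
  x :: nat => complex with x 0 = 0 (index 0 unused) and square-summable moduli.\<close>

type_synonym seq = "nat \<Rightarrow> complex"
type_synonym op = "seq \<Rightarrow> seq"

definition ell2 :: "seq \<Rightarrow> bool" where
  "ell2 x \<longleftrightarrow> x 0 = 0 \<and> summable (\<lambda>i. (cmod (x i))\<^sup>2)"

definition l2norm :: "seq \<Rightarrow> real" where
  "l2norm x = sqrt (\<Sum>i. (cmod (x i))\<^sup>2)"

definition l2inner :: "seq \<Rightarrow> seq \<Rightarrow> complex" where
  "l2inner x y = (\<Sum>i. cnj (x i) * y i)"

definition unit_vec :: "nat \<Rightarrow> seq" where
  "unit_vec j = (\<lambda>i. if i = j then 1 else 0)"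

definition bounded_op :: "op \<Rightarrow> bool" where
  "bounded_op T \<longleftrightarrow>
     (\<forall>x. ell2 x \<longrightarrow> ell2 (T x)) \<and>
     (\<forall>x y. ell2 x \<longrightarrow> ell2 y \<longrightarrow> T (\<lambda>i. x i + y i) = (\<lambda>i. T x i + T y i)) \<and>
     (\<forall>c x. ell2 x \<longrightarrow> T (\<lambda>i. c * x i) = (\<lambda>i. c * T x i)) \<and>
     (\<exists>C. \<forall>x. ell2 x \<longrightarrow> l2norm (T x) \<le> C * l2norm x)"

definition op_norm :: "op \<Rightarrow> real" where
  "op_norm T = Sup {l2norm (T x) | x. ell2 x \<and> l2norm x \<le> 1}"

definition adjoint :: "op \<Rightarrow> op" where
  "adjoint T y = (\<lambda>j. if j = 0 then 0 else l2inner (T (unit_vec j)) y)"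

definition proj :: "nat set \<Rightarrow> op" where
  "proj \<Gamma> x = (\<lambda>i. if i \<in> \<Gamma> then x i else 0)"

definition projab :: "nat \<Rightarrow> nat \<Rightarrow> op" where
  "projab a b = proj {a+1..b}"

definition proj_perp :: "nat \<Rightarrow> op" where
  "proj_perp K x = (\<lambda>i. x i - proj {1..K} x i)"

definition mat_entry :: "op \<Rightarrow> nat \<Rightarrow> nat \<Rightarrow> complex" where
  "mat_entry A i j = A (unit_vec j) i"

definition mu :: "op \<Rightarrow> real" where
  "mu A = Sup {(cmod (mat_entry A i j))\<^sup>2 | i j. 1 \<le> i \<and> 1 \<le> j}"

definition mu_NM :: "(nat \<Rightarrow> nat) \<Rightarrow> (nat \<Rightarrow> nat) \<Rightarrow> op \<Rightarrow> nat \<Rightarrow> nat \<Rightarrow> real" where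
  "mu_NM N M U k l =
     sqrt (mu (projab (N (k-1)) (N k) \<circ> U \<circ> projab (M (l-1)) (M l))
           * mu (projab (N (k-1)) (N k) \<circ> U))"

definition mu_NM_inf :: "(nat \<Rightarrow> nat) \<Rightarrow> (nat \<Rightarrow> nat) \<Rightarrow> nat \<Rightarrow> op \<Rightarrow> nat \<Rightarrow> real" where
  "mu_NM_inf N M r U k =
     sqrt (mu (projab (N (k-1)) (N k) \<circ> U \<circ> proj_perp (M (r-1)))
           * mu (projab (N (k-1)) (N k) \<circ> U))"

definition mlq :: "(nat \<Rightarrow> nat) \<Rightarrow> (nat \<Rightarrow> nat) \<Rightarrow> nat \<Rightarrow> real" where
  "mlq N m k = real (m k) / real (N k - N (k-1))"

definition level_of :: "(nat \<Rightarrow> nat) \<Rightarrow> nat \<Rightarrow> nat \<Rightarrow> nat" where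
  "level_of N r j = (THE k. k \<in> {1..r} \<and> j \<in> {N (k-1)+1..N k})"

definition ml_bernoulli :: "(nat \<Rightarrow> nat) \<Rightarrow> (nat \<Rightarrow> nat) \<Rightarrow> nat \<Rightarrow> (nat \<Rightarrow> bool) pmf" where
  "ml_bernoulli N m r =
     Pi_pmf {1..N r} False (\<lambda>j. bernoulli_pmf (mlq N m (level_of N r j)))"

definition Omega_k :: "(nat \<Rightarrow> nat) \<Rightarrow> (nat \<Rightarrow> bool) \<Rightarrow> nat \<Rightarrow> nat set" where
  "Omega_k N \<delta> k = {j \<in> {N (k-1)+1..N k}. \<delta> j}"

definition Dop :: "(nat \<Rightarrow> nat) \<Rightarrow> (nat \<Rightarrow> nat) \<Rightarrow> nat \<Rightarrow> (nat \<Rightarrow> bool) \<Rightarrow> op" where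
  "Dop N m r \<delta> x = (\<lambda>i. \<Sum>k\<in>{1..r}. complex_of_real (1 / mlq N m k) * proj (Omega_k N \<delta> k) x i)"

end

theory Submission
  imports Defs
begin

(*
  Fix a column index i and write u = U e_i.  The operator P_{i} U^* D U P_{i} acts on the
  i-th coordinate as multiplication by the random weighted sum  sum_j delta_j |u_j|^2 / q_j
  of independent Bernoulli variables, whose mean  sum_j |u_j|^2  is at most 1.  Each summand
  deviates from its mean by at most |u_j|^2 (1/q_j - 1), and |u_j|^2 is bounded by the local
  coherence of the sampling level of j and the column level of i.  So the Chernoff bound, with
  exp x <= 1 + x + x^2 for x <= 1, gives the tail exp(-t^2/(4K)), where K is the maximum in the
  coherence condition.  That condition makes each tail at most gamma/(2M), and a union bound
  over the at most M columns finishes.  Under full sampling every q_j is 1 and the weighted sum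
  is at most |u|^2 <= 1.
*)

lemma exp_le_one_plus_x_plus_sq:
  fixes x :: real
  assumes "x \<le> 1"
  shows "exp x \<le> 1 + x + x\<^sup>2"
proof (cases "x \<ge> 0")
  case True
  thus ?thesis using exp_bound assms by auto
next
  case False
  have "(1 - x) * (1 + x + x\<^sup>2) = 1 - x ^ 3"
    by (simp add: algebra_simps power2_eq_square power3_eq_cube)
  moreover have "x ^ 3 \<le> 0" using False by (simp add: power3_eq_cube mult_nonneg_nonpos)
  ultimately have "1 / (1 - x) \<le> 1 + x + x\<^sup>2" using False by (simp add: divide_le_eq mult.commute)
  moreover have "exp x \<le> 1 / (1 - x)"
    using exp_ge_add_one_self[of "-x"] False by (simp add: exp_minus field_simps)
  ultimately show ?thesis by linarith
qed

lemma ell2_zero: "ell2 (\<lambda>_. 0)"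
  by (simp add: ell2_def)

lemma ell2_unit_vec:
  assumes "1 \<le> j"
  shows "ell2 (unit_vec j)"
proof -
  have "(\<lambda>i. (cmod (unit_vec j i))\<^sup>2) = (\<lambda>i. if i = j then 1 else 0)"
    by (auto simp: unit_vec_def)
  thus ?thesis using assms unfolding ell2_def by (simp add: unit_vec_def)
qed

lemma l2norm_unit_vec: "l2norm (unit_vec j) = 1"
proof -
  have "(\<lambda>i. (cmod (unit_vec j i))\<^sup>2) = (\<lambda>i. if i = j then 1 else 0)"
    by (auto simp: unit_vec_def)
  thus ?thesis unfolding l2norm_def using sums_single[of j "\<lambda>_. 1::real"] by (simp add: sums_iff)
qed

lemma l2norm_nonneg: "ell2 x \<Longrightarrow> 0 \<le> l2norm x"
  unfolding l2norm_def ell2_def by (simp add: suminf_nonneg)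

lemma sum_cmod_sq_le_l2norm_sq:
  assumes "ell2 x" "finite J"
  shows "(\<Sum>i\<in>J. (cmod (x i))\<^sup>2) \<le> (l2norm x)\<^sup>2"
proof -
  have s: "summable (\<lambda>i. (cmod (x i))\<^sup>2)" using assms(1) by (simp add: ell2_def)
  have "(\<Sum>i\<in>J. (cmod (x i))\<^sup>2) \<le> (\<Sum>i. (cmod (x i))\<^sup>2)"
    by (rule sum_le_suminf[OF s assms(2)]) auto
  thus ?thesis unfolding l2norm_def using suminf_nonneg[OF s] by simp
qed

lemma cmod_le_l2norm:
  assumes "ell2 x"
  shows "cmod (x i) \<le> l2norm x"
proof -
  have "(cmod (x i))\<^sup>2 \<le> (l2norm x)\<^sup>2" using sum_cmod_sq_le_l2norm_sq[OF assms, of "{i}"] by simp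
  thus ?thesis using l2norm_nonneg[OF assms] by (rule power2_le_imp_le)
qed

lemma bounded_op_zero: "bounded_op T \<Longrightarrow> T (\<lambda>_. 0) = (\<lambda>_. 0)"
proof -
  assume "bounded_op T"
  hence "T (\<lambda>i. 0 * 0) = (\<lambda>i. 0 * T (\<lambda>_. 0) i)"
    using ell2_zero unfolding bounded_op_def by blast
  thus ?thesis by simp
qed

lemma l2norm_le_op_norm:
  assumes "bounded_op T" "ell2 x" "l2norm x \<le> 1"
  shows "l2norm (T x) \<le> op_norm T"
proof -
  obtain C where C: "\<And>y. ell2 y \<Longrightarrow> l2norm (T y) \<le> C * l2norm y"
    using assms(1) unfolding bounded_op_def by blast
  have "l2norm (T y) \<le> \<bar>C\<bar>" if "ell2 y" "l2norm y \<le> 1" for y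
  proof -
    have "C * l2norm y \<le> \<bar>C\<bar> * l2norm y" using l2norm_nonneg[OF that(1)] by (simp add: mult_right_mono)
    also have "\<dots> \<le> \<bar>C\<bar>" using that(2) l2norm_nonneg[OF that(1)] by (simp add: mult_left_le)
    finally show ?thesis using C[OF that(1)] by linarith
  qed
  hence "bdd_above {l2norm (T y) | y. ell2 y \<and> l2norm y \<le> 1}"
    by (intro bdd_aboveI[of _ "\<bar>C\<bar>"]) blast
  thus ?thesis unfolding op_norm_def by (rule cSup_upper[rotated]) (use assms in blast)
qed

lemma sum_column_sq_le_one:
  assumes "bounded_op U" "op_norm U \<le> 1" "1 \<le> i" "finite J"
  shows "(\<Sum>j\<in>J. (cmod (U (unit_vec i) j))\<^sup>2) \<le> 1"
proof -
  have col: "ell2 (U (unit_vec i))"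
    using assms(1,3) ell2_unit_vec unfolding bounded_op_def by blast
  have "l2norm (U (unit_vec i)) \<le> 1"
    using l2norm_le_op_norm[OF assms(1) ell2_unit_vec[OF assms(3)]] l2norm_unit_vec assms(2) by simp
  hence "(l2norm (U (unit_vec i)))\<^sup>2 \<le> 1" using l2norm_nonneg[OF col] by (simp add: power_le_one)
  thus ?thesis using sum_cmod_sq_le_l2norm_sq[OF col assms(4)] by linarith
qed

lemma cmod_column_le_one:
  assumes "bounded_op U" "op_norm U \<le> 1" "1 \<le> i"
  shows "cmod (U (unit_vec i) j) \<le> 1"
  using sum_column_sq_le_one[OF assms, of "{j}"] by (simp add: power_le_one_iff abs_le_iff)

lemma op_norm_coordinate_scaling_le:
  "op_norm (\<lambda>x j. if j = i then c * x i else 0) \<le> cmod c"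
  unfolding op_norm_def
proof (rule cSup_least)
  have "l2norm (\<lambda>_. 0) = 0" by (simp add: l2norm_def)
  thus "{l2norm (\<lambda>j. if j = i then c * x i else 0) |x. ell2 x \<and> l2norm x \<le> 1} \<noteq> {}"
    using ell2_zero by fastforce
next
  fix v assume "v \<in> {l2norm (\<lambda>j. if j = i then c * x i else 0) |x. ell2 x \<and> l2norm x \<le> 1}"
  then obtain x where x: "ell2 x" "l2norm x \<le> 1" and v: "v = l2norm (\<lambda>j. if j = i then c * x i else 0)"
    by blast
  have "(\<lambda>j. (cmod (if j = i then c * x i else 0))\<^sup>2) = (\<lambda>j. if j = i then (cmod (c * x i))\<^sup>2 else 0)"
    by auto
  hence "v = cmod c * cmod (x i)"
    unfolding v l2norm_def using sums_single[of i "\<lambda>_. (cmod (c * x i))\<^sup>2"]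
    by (simp add: sums_iff norm_mult)
  also have "\<dots> \<le> cmod c" using cmod_le_l2norm[OF x(1), of i] x(2) by (simp add: mult_left_le)
  finally show "v \<le> cmod c" .
qed

lemma compression_of_diagonal_eq:
  assumes "bounded_op U" "1 \<le> i" "finite J" "\<And>j. j \<notin> J \<Longrightarrow> w j = 0"
  shows "proj {i} \<circ> adjoint U \<circ> (\<lambda>y j. complex_of_real (w j) * y j) \<circ> U \<circ> proj {i}
       = (\<lambda>x j. if j = i then complex_of_real (\<Sum>j\<in>J. w j * (cmod (U (unit_vec i) j))\<^sup>2) * x i else 0)"
proof (intro ext)
  fix x j
  define u where "u = U (unit_vec i)"
  have "proj {i} x = (\<lambda>k. x i * unit_vec i k)" by (auto simp: proj_def unit_vec_def)
  moreover have "U (\<lambda>k. x i * unit_vec i k) = (\<lambda>k. x i * u k)"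
    using assms(1) ell2_unit_vec[OF assms(2)] unfolding bounded_op_def u_def by blast
  ultimately have Ux: "U (proj {i} x) = (\<lambda>k. x i * u k)" by simp
  have "(\<Sum>k. cnj (u k) * (complex_of_real (w k) * (x i * u k)))
      = (\<Sum>k\<in>J. cnj (u k) * (complex_of_real (w k) * (x i * u k)))"
    by (rule suminf_finite[OF assms(3)]) (simp add: assms(4))
  also have "\<dots> = (\<Sum>k\<in>J. complex_of_real (w k * (cmod (u k))\<^sup>2) * x i)"
  proof (intro sum.cong refl)
    fix k
    have "cnj (u k) * u k = complex_of_real ((cmod (u k))\<^sup>2)"
      using complex_norm_square[of "u k"] by (simp add: mult.commute)
    thus "cnj (u k) * (complex_of_real (w k) * (x i * u k)) = complex_of_real (w k * (cmod (u k))\<^sup>2) * x i"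
      by (simp add: algebra_simps)
  qed
  finally have "l2inner u (\<lambda>k. complex_of_real (w k) * (x i * u k))
      = complex_of_real (\<Sum>k\<in>J. w k * (cmod (u k))\<^sup>2) * x i"
    unfolding l2inner_def by (simp add: sum_distrib_right)
  thus "(proj {i} \<circ> adjoint U \<circ> (\<lambda>y j. complex_of_real (w j) * y j) \<circ> U \<circ> proj {i}) x j
      = (if j = i then complex_of_real (\<Sum>j\<in>J. w j * (cmod (U (unit_vec i) j))\<^sup>2) * x i else 0)"
    unfolding comp_def Ux using assms(2) by (simp add: proj_def adjoint_def u_def)
qed

lemma op_norm_compression_of_diagonal_le:
  assumes "bounded_op U" "1 \<le> i" "finite J" "\<And>j. 0 \<le> w j" "\<And>j. j \<notin> J \<Longrightarrow> w j = 0"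
  shows "op_norm (proj {i} \<circ> adjoint U \<circ> (\<lambda>y j. complex_of_real (w j) * y j) \<circ> U \<circ> proj {i})
       \<le> (\<Sum>j\<in>J. w j * (cmod (U (unit_vec i) j))\<^sup>2)"
proof -
  define S where "S = (\<Sum>j\<in>J. w j * (cmod (U (unit_vec i) j))\<^sup>2)"
  have "0 \<le> S" unfolding S_def using assms(4) by (simp add: sum_nonneg)
  hence "cmod (complex_of_real S) = S" by simp
  moreover have "proj {i} \<circ> adjoint U \<circ> (\<lambda>y j. complex_of_real (w j) * y j) \<circ> U \<circ> proj {i}
      = (\<lambda>x j. if j = i then complex_of_real S * x i else 0)"
    unfolding S_def by (rule compression_of_diagonal_eq[OF assms(1-3)]) (rule assms(5))
  ultimately show ?thesis
    using op_norm_coordinate_scaling_le[of i "complex_of_real S"] unfolding S_def by simp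
qed

lemma strict_mono_on_levels:
  fixes N :: "nat \<Rightarrow> nat"
  assumes "N 0 = 0" "1 \<le> N 1" "\<forall>k\<in>{1..<r}. N k < N (Suc k)"
  shows "strict_mono_on {0..r} N"
proof (rule strict_mono_onI)
  fix k k' :: nat assume "k \<in> {0..r}" "k' \<in> {0..r}" "k < k'"
  thus "N k < N k'"
  proof (induction k')
    case (Suc k')
    have "N k' < N (Suc k')" using assms Suc.prems by (cases "k' = 0") auto
    thus ?case using Suc by (cases "k = k'") auto
  qed simp
qed

lemma level_exists:
  fixes f :: "nat \<Rightarrow> nat"
  assumes "f 0 = 0" "1 \<le> j" "j \<le> f r"
  shows "\<exists>k\<in>{1..r}. j \<in> {f (k-1)+1..f k}"
proof -
  define k where "k = (LEAST k. j \<le> f k)"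
  have jk: "j \<le> f k" unfolding k_def by (rule LeastI[of _ r]) (use assms in auto)
  have kr: "k \<le> r" unfolding k_def by (rule Least_le) (use assms in auto)
  have k0: "k \<noteq> 0" using jk assms by (cases k) auto
  have "\<not> j \<le> f (k-1)" unfolding k_def by (rule not_less_Least) (use k0 k_def in auto)
  thus ?thesis using jk kr k0 by (intro bexI[of _ k]) auto
qed

lemma level_unique:
  fixes N :: "nat \<Rightarrow> nat"
  assumes N: "strict_mono_on {0..r} N"
    and "k \<in> {1..r}" "j \<in> {N (k-1)+1..N k}" and "k' \<in> {1..r}" "j \<in> {N (k'-1)+1..N k'}"
  shows "k = k'"
proof -
  have "\<not> k < k'" if "k \<in> {1..r}" "j \<in> {N (k-1)+1..N k}" "k' \<in> {1..r}" "j \<in> {N (k'-1)+1..N k'}"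
    for k k'
  proof
    assume "k < k'"
    hence "N k \<le> N (k'-1)" using that by (intro strict_mono_on_leD[OF N]) auto
    thus False using that by auto
  qed
  thus ?thesis using assms(2-) by (meson linorder_neqE_nat)
qed

lemma level_of_eq:
  fixes N :: "nat \<Rightarrow> nat"
  assumes "strict_mono_on {0..r} N" "k \<in> {1..r}" "j \<in> {N (k-1)+1..N k}"
  shows "level_of N r j = k"
  unfolding level_of_def
  by (rule the_equality) (use assms level_unique[OF assms(1)] in blast)+

lemma level_of_mem:
  fixes N :: "nat \<Rightarrow> nat"
  assumes "strict_mono_on {0..r} N" "N 0 = 0" "j \<in> {1..N r}"
  shows "level_of N r j \<in> {1..r}" "j \<in> {N (level_of N r j - 1)+1..N (level_of N r j)}"
  using level_exists[of N j r] level_of_eq[OF assms(1)] assms(2,3) by auto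

definition ml_weight :: "(nat \<Rightarrow> nat) \<Rightarrow> (nat \<Rightarrow> nat) \<Rightarrow> nat \<Rightarrow> (nat \<Rightarrow> bool) \<Rightarrow> nat \<Rightarrow> real" where
  "ml_weight N m r \<delta> j = (if j \<in> {1..N r} \<and> \<delta> j then 1 / mlq N m (level_of N r j) else 0)"

lemma Dop_eq_ml_weight:
  fixes N :: "nat \<Rightarrow> nat"
  assumes N: "strict_mono_on {0..r} N" "N 0 = 0"
  shows "Dop N m r \<delta> = (\<lambda>y j. complex_of_real (ml_weight N m r \<delta> j) * y j)"
proof (intro ext)
  fix y j
  have "Dop N m r \<delta> y j
      = (\<Sum>k\<in>{1..r}. if j \<in> {N (k-1)+1..N k} then complex_of_real (ml_weight N m r \<delta> j) * y j else 0)"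
    unfolding Dop_def
  proof (intro sum.cong refl)
    fix k assume k: "k \<in> {1..r}"
    have "N k \<le> N r" using k by (intro strict_mono_on_leD[OF N(1)]) auto
    thus "complex_of_real (1 / mlq N m k) * proj (Omega_k N \<delta> k) y j
        = (if j \<in> {N (k-1)+1..N k} then complex_of_real (ml_weight N m r \<delta> j) * y j else 0)"
      using level_of_eq[OF N(1) k] by (auto simp: proj_def Omega_k_def ml_weight_def)
  qed
  also have "\<dots> = complex_of_real (ml_weight N m r \<delta> j) * y j"
  proof (cases "j \<in> {1..N r}")
    case True
    have "j \<in> {N (k-1)+1..N k} \<longleftrightarrow> k = level_of N r j" if "k \<in> {1..r}" for k
      using level_of_eq[OF N(1) that] level_of_mem[OF N True] by auto
    hence "(\<Sum>k\<in>{1..r}. if j \<in> {N (k-1)+1..N k} then complex_of_real (ml_weight N m r \<delta> j) * y j else 0)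
        = (\<Sum>k\<in>{1..r}. if k = level_of N r j then complex_of_real (ml_weight N m r \<delta> j) * y j else 0)"
      by (intro sum.cong) auto
    thus ?thesis using level_of_mem(1)[OF N True] by simp
  next
    case False
    thus ?thesis by (auto simp: ml_weight_def intro!: sum.neutral)
  qed
  finally show "Dop N m r \<delta> y j = complex_of_real (ml_weight N m r \<delta> j) * y j" .
qed

lemma op_norm_compression_Dop_le:
  fixes N :: "nat \<Rightarrow> nat"
  assumes "bounded_op U" "1 \<le> i" "strict_mono_on {0..r} N" "N 0 = 0"
  shows "op_norm (proj {i} \<circ> adjoint U \<circ> Dop N m r \<delta> \<circ> U \<circ> proj {i})
       \<le> (\<Sum>j\<in>{1..N r}. if \<delta> j then (cmod (U (unit_vec i) j))\<^sup>2 / mlq N m (level_of N r j) else 0)"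
proof -
  have "op_norm (proj {i} \<circ> adjoint U \<circ> Dop N m r \<delta> \<circ> U \<circ> proj {i})
      \<le> (\<Sum>j\<in>{1..N r}. ml_weight N m r \<delta> j * (cmod (U (unit_vec i) j))\<^sup>2)"
    unfolding Dop_eq_ml_weight[OF assms(3,4)]
    by (rule op_norm_compression_of_diagonal_le[OF assms(1,2)]) (auto simp: ml_weight_def mlq_def)
  also have "\<dots> = (\<Sum>j\<in>{1..N r}. if \<delta> j then (cmod (U (unit_vec i) j))\<^sup>2 / mlq N m (level_of N r j) else 0)"
    by (intro sum.cong) (auto simp: ml_weight_def)
  finally show ?thesis .
qed

lemma bernoulli_exp_centered_le:
  fixes p a K l :: real
  assumes p: "0 < p" "p \<le> 1" and a: "0 \<le> a" and aK: "a * (1/p - 1) \<le> K" and l: "0 \<le> l" "l * K \<le> 1"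
  shows "exp (l * (a/p - a)) * p + exp (l * (0 - a)) * (1 - p) \<le> exp (l\<^sup>2 * K * a)"
proof -
  define y1 where "y1 = l * (a/p - a)"
  define y0 where "y0 = l * (0 - a)"
  have "y1 = l * (a * (1/p - 1))" unfolding y1_def by (simp add: algebra_simps)
  also have "\<dots> \<le> l * K" using aK l(1) by (rule mult_left_mono)
  finally have y1: "y1 \<le> 1" using l(2) by linarith
  have y0: "y0 \<le> 1" unfolding y0_def using mult_nonneg_nonneg[OF l(1) a] by simp
  have "exp y1 * p + exp y0 * (1 - p) \<le> (1 + y1 + y1\<^sup>2) * p + (1 + y0 + y0\<^sup>2) * (1 - p)"
    using exp_le_one_plus_x_plus_sq[OF y1] exp_le_one_plus_x_plus_sq[OF y0] p
    by (intro add_mono mult_right_mono) auto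
  also have "\<dots> = 1 + l\<^sup>2 * a * (a * (1/p - 1))"
    unfolding y1_def y0_def using p by (simp add: field_simps power2_eq_square)
  also have "\<dots> \<le> 1 + l\<^sup>2 * a * K" using aK a by (intro add_left_mono mult_left_mono) auto
  also have "\<dots> \<le> exp (l\<^sup>2 * K * a)" using exp_ge_add_one_self[of "l\<^sup>2 * K * a"] by (simp add: mult_ac)
  finally show ?thesis unfolding y1_def y0_def .
qed

lemma finite_set_Pi_pmf_bool: "finite J \<Longrightarrow> finite (set_pmf (Pi_pmf J False (P :: 'a \<Rightarrow> bool pmf)))"
  by (rule finite_subset[OF set_Pi_pmf_subset' finite_PiE_dflt]) auto

lemma expectation_exp_weighted_bernoulli_sum_le:
  fixes J :: "nat set" and p a :: "nat \<Rightarrow> real" and K l :: real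
  assumes J: "finite J" and p: "\<And>j. j \<in> J \<Longrightarrow> 0 < p j \<and> p j \<le> 1"
    and a: "\<And>j. j \<in> J \<Longrightarrow> 0 \<le> a j" and asum: "(\<Sum>j\<in>J. a j) \<le> 1"
    and aK: "\<And>j. j \<in> J \<Longrightarrow> a j * (1 / p j - 1) \<le> K"
    and l: "0 \<le> l" "l * K \<le> 1" and K: "0 \<le> K"
  shows "measure_pmf.expectation (Pi_pmf J False (\<lambda>j. bernoulli_pmf (p j)))
           (\<lambda>\<delta>. exp (l * ((\<Sum>j\<in>J. if \<delta> j then a j / p j else 0) - (\<Sum>j\<in>J. a j)))) \<le> exp (l\<^sup>2 * K)"
proof -
  define f where "f j b = exp (l * ((if b then a j / p j else 0) - a j))" for j b
  have "(\<lambda>\<delta>. exp (l * ((\<Sum>j\<in>J. if \<delta> j then a j / p j else 0) - (\<Sum>j\<in>J. a j)))) = (\<lambda>\<delta>. \<Prod>j\<in>J. f j (\<delta> j))"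
    unfolding f_def using J by (simp add: exp_sum[symmetric] sum_distrib_left sum_subtractf algebra_simps)
  hence "measure_pmf.expectation (Pi_pmf J False (\<lambda>j. bernoulli_pmf (p j)))
           (\<lambda>\<delta>. exp (l * ((\<Sum>j\<in>J. if \<delta> j then a j / p j else 0) - (\<Sum>j\<in>J. a j))))
      = (\<Prod>j\<in>J. measure_pmf.expectation (bernoulli_pmf (p j)) (f j))"
    by (simp only:) (rule expectation_prod_Pi_pmf[OF J], auto simp: f_def intro: integrable_measure_pmf_finite)
  also have "\<dots> \<le> (\<Prod>j\<in>J. exp (l\<^sup>2 * K * a j))"
  proof (rule prod_mono)
    fix j assume j: "j \<in> J"
    have "measure_pmf.expectation (bernoulli_pmf (p j)) (f j) = f j True * p j + f j False * (1 - p j)"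
      using p[OF j] by (intro integral_bernoulli_pmf) auto
    also have "\<dots> \<le> exp (l\<^sup>2 * K * a j)"
      unfolding f_def using bernoulli_exp_centered_le[of "p j" "a j" K l] p[OF j] a[OF j] aK[OF j] l by simp
    finally show "0 \<le> measure_pmf.expectation (bernoulli_pmf (p j)) (f j) \<and>
        measure_pmf.expectation (bernoulli_pmf (p j)) (f j) \<le> exp (l\<^sup>2 * K * a j)"
      by (simp add: f_def)
  qed
  also have "\<dots> = exp (l\<^sup>2 * K * (\<Sum>j\<in>J. a j))" using J by (simp add: exp_sum sum_distrib_left)
  also have "\<dots> \<le> exp (l\<^sup>2 * K)" using asum K by (simp add: mult_left_le)
  finally show ?thesis .
qed

lemma weighted_bernoulli_sum_chernoff:
  fixes J :: "nat set" and p a :: "nat \<Rightarrow> real" and K l t :: real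
  assumes J: "finite J" and p: "\<And>j. j \<in> J \<Longrightarrow> 0 < p j \<and> p j \<le> 1"
    and a: "\<And>j. j \<in> J \<Longrightarrow> 0 \<le> a j" and asum: "(\<Sum>j\<in>J. a j) \<le> 1"
    and aK: "\<And>j. j \<in> J \<Longrightarrow> a j * (1 / p j - 1) \<le> K"
    and l: "0 \<le> l" "l * K \<le> 1" and K: "0 \<le> K"
  shows "measure_pmf.prob (Pi_pmf J False (\<lambda>j. bernoulli_pmf (p j)))
           {\<delta>. 1 + t \<le> (\<Sum>j\<in>J. if \<delta> j then a j / p j else 0)} \<le> exp (- (l * t) + l\<^sup>2 * K)"
proof -
  define P where "P = Pi_pmf J False (\<lambda>j. bernoulli_pmf (p j))"
  define S where "S \<delta> = (\<Sum>j\<in>J. if \<delta> j then a j / p j else 0) - (\<Sum>j\<in>J. a j)" for \<delta>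
  have markov: "indicator {\<delta>. 1 + t \<le> (\<Sum>j\<in>J. if \<delta> j then a j / p j else 0)} \<delta>
      \<le> exp (- (l * t)) * exp (l * S \<delta>)" for \<delta>
  proof (cases "1 + t \<le> (\<Sum>j\<in>J. if \<delta> j then a j / p j else 0)")
    case True
    hence "0 \<le> l * (S \<delta> - t)" unfolding S_def using asum l(1) by simp
    thus ?thesis using True by (simp add: exp_add[symmetric] algebra_simps)
  qed simp
  have "measure_pmf.prob P {\<delta>. 1 + t \<le> (\<Sum>j\<in>J. if \<delta> j then a j / p j else 0)}
      = measure_pmf.expectation P (indicator {\<delta>. 1 + t \<le> (\<Sum>j\<in>J. if \<delta> j then a j / p j else 0)})"
    by simp
  also have "\<dots> \<le> measure_pmf.expectation P (\<lambda>\<delta>. exp (- (l * t)) * exp (l * S \<delta>))"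
    using finite_set_Pi_pmf_bool[OF J] unfolding P_def
    by (intro integral_mono integrable_measure_pmf_finite markov)
  also have "\<dots> \<le> exp (- (l * t)) * exp (l\<^sup>2 * K)"
    unfolding P_def S_def by (simp add: expectation_exp_weighted_bernoulli_sum_le[OF J p a asum aK l K])
  finally show ?thesis unfolding P_def by (simp add: exp_add[symmetric])
qed

lemma weighted_bernoulli_sum_tail:
  fixes J :: "nat set" and p a :: "nat \<Rightarrow> real" and K t :: real
  assumes J: "finite J" and p: "\<And>j. j \<in> J \<Longrightarrow> 0 < p j \<and> p j \<le> 1"
    and a: "\<And>j. j \<in> J \<Longrightarrow> 0 \<le> a j" and asum: "(\<Sum>j\<in>J. a j) \<le> 1"
    and aK: "\<And>j. j \<in> J \<Longrightarrow> a j * (1 / p j - 1) \<le> K"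
    and K: "0 < K" and t: "0 \<le> t" "t \<le> 2"
  shows "measure_pmf.prob (Pi_pmf J False (\<lambda>j. bernoulli_pmf (p j)))
           {\<delta>. 1 + t \<le> (\<Sum>j\<in>J. if \<delta> j then a j / p j else 0)} \<le> exp (- (t\<^sup>2 / (4 * K)))"
proof -
  define l where "l = t / (2 * K)"
  have "l * K \<le> 1" unfolding l_def using K t by simp
  moreover have "- (l * t) + l\<^sup>2 * K = - (t\<^sup>2 / (4 * K))"
    unfolding l_def using K by (simp add: field_simps power2_eq_square)
  ultimately show ?thesis
    using weighted_bernoulli_sum_chernoff[OF J p a asum aK, of l t] K t unfolding l_def by simp
qed

lemma proj_perp_eq_proj: "proj_perp K = proj (- {1..K})"
  by (intro ext) (simp add: proj_perp_def proj_def)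

lemma mat_entry_proj_comp_proj:
  assumes "bounded_op U"
  shows "mat_entry (proj B \<circ> U \<circ> proj A) i j = (if i \<in> B \<and> j \<in> A then U (unit_vec j) i else 0)"
proof -
  have "proj A (unit_vec j) = (if j \<in> A then unit_vec j else (\<lambda>_. 0))"
    by (auto simp: proj_def unit_vec_def)
  thus ?thesis using bounded_op_zero[OF assms] by (simp add: mat_entry_def proj_def)
qed

lemma mat_entry_proj_comp:
  "mat_entry (proj B \<circ> U) i j = (if i \<in> B then U (unit_vec j) i else 0)"
  by (simp add: mat_entry_def proj_def)

lemma cmod_mat_entry_sq_le_mu:
  assumes "\<And>i j. 1 \<le> i \<Longrightarrow> 1 \<le> j \<Longrightarrow> (cmod (mat_entry X i j))\<^sup>2 \<le> C" "1 \<le> i" "1 \<le> j"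
  shows "(cmod (mat_entry X i j))\<^sup>2 \<le> mu X"
  unfolding mu_def
  by (rule cSup_upper) (use assms in \<open>blast, intro bdd_aboveI[of _ C], blast\<close>)

lemma cmod_entry_sq_le_local_coherence:
  assumes U: "bounded_op U" "op_norm U \<le> 1" and i: "1 \<le> i" "i \<in> A" and j: "j \<in> {a+1..b}"
  shows "(cmod (U (unit_vec i) j))\<^sup>2 \<le> sqrt (mu (projab a b \<circ> U \<circ> proj A) * mu (projab a b \<circ> U))"
proof -
  have col: "(cmod (U (unit_vec j') i'))\<^sup>2 \<le> 1" if "1 \<le> j'" for i' j'
    using cmod_column_le_one[OF U that, of i'] by (simp add: power_le_one)
  have "(cmod (U (unit_vec i) j))\<^sup>2 \<le> mu (projab a b \<circ> U \<circ> proj A)"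
    using cmod_mat_entry_sq_le_mu[of "projab a b \<circ> U \<circ> proj A" 1 j i] col i j
    unfolding projab_def mat_entry_proj_comp_proj[OF U(1)] by (simp split: if_splits)
  moreover have "(cmod (U (unit_vec i) j))\<^sup>2 \<le> mu (projab a b \<circ> U)"
    using cmod_mat_entry_sq_le_mu[of "projab a b \<circ> U" 1 j i] col i j
    unfolding projab_def mat_entry_proj_comp by (simp split: if_splits)
  ultimately have "((cmod (U (unit_vec i) j))\<^sup>2)\<^sup>2 \<le> mu (projab a b \<circ> U \<circ> proj A) * mu (projab a b \<circ> U)"
    unfolding power2_eq_square[of "(cmod _)\<^sup>2"] by (intro mult_mono) (auto intro: order_trans[rotated])
  thus ?thesis by (rule real_le_rsqrt)
qed

lemma mlq_pos_le_one:
  assumes "1 \<le> m k" "m k \<le> N k - N (k-1)"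
  shows "0 < mlq N m k" "mlq N m k \<le> 1"
  using assms by (auto simp: mlq_def field_simps)

definition max_weighted_coherence :: "(nat \<Rightarrow> nat) \<Rightarrow> (nat \<Rightarrow> nat) \<Rightarrow> nat \<Rightarrow> (nat \<Rightarrow> real) \<Rightarrow> real" where
  "max_weighted_coherence N m r c = Max ((\<lambda>k. (real (N k - N (k-1)) / real (m k) - 1) * c k) ` {1..r})"

lemma weighted_entry_le_max_weighted_coherence:
  fixes N m :: "nat \<Rightarrow> nat" and c :: "nat \<Rightarrow> real"
  assumes N: "strict_mono_on {0..r} N" "N 0 = 0"
    and m: "\<forall>k\<in>{1..r}. 1 \<le> m k \<and> m k \<le> N k - N (k-1)"
    and j: "j \<in> {1..N r}" and ac: "\<And>k. j \<in> {N (k-1)+1..N k} \<Longrightarrow> a \<le> c k"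
  shows "a * (1 / mlq N m (level_of N r j) - 1) \<le> max_weighted_coherence N m r c"
proof -
  define k where "k = level_of N r j"
  have k: "k \<in> {1..r}" "j \<in> {N (k-1)+1..N k}" using level_of_mem[OF N j] unfolding k_def by auto
  define d where "d = real (N k - N (k-1)) / real (m k) - 1"
  have "0 < mlq N m k" "mlq N m k \<le> 1" using m k(1) mlq_pos_le_one by auto
  hence "1 \<le> 1 / mlq N m k" by (simp add: le_divide_eq_1_pos)
  moreover have "1 / mlq N m k - 1 = d" unfolding d_def by (simp add: mlq_def)
  ultimately have "0 \<le> d" by linarith
  have "a * (1 / mlq N m k - 1) \<le> d * c k"
    using mult_right_mono[OF ac[OF k(2)] \<open>0 \<le> d\<close>] \<open>1 / mlq N m k - 1 = d\<close> by (simp add: mult.commute)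
  also have "\<dots> \<le> max_weighted_coherence N m r c"
    unfolding d_def max_weighted_coherence_def using k(1) by (intro Max_ge) auto
  finally show ?thesis unfolding k_def .
qed

definition coherence_condition ::
    "(nat \<Rightarrow> nat) \<Rightarrow> (nat \<Rightarrow> nat) \<Rightarrow> (nat \<Rightarrow> nat) \<Rightarrow> nat \<Rightarrow> op \<Rightarrow> nat \<Rightarrow> real \<Rightarrow> real \<Rightarrow> bool" where
  "coherence_condition N M m r U Mbig B L \<longleftrightarrow>
     (if Mbig = M r then \<forall>l\<in>{1..r}. B \<ge> L * max_weighted_coherence N m r (\<lambda>k. mu_NM N M U k l)
      else (\<forall>l\<in>{1..<r}. B \<ge> L * max_weighted_coherence N m r (\<lambda>k. mu_NM N M U k l)) \<and>
        B \<ge> L * max_weighted_coherence N m r (\<lambda>k. mu_NM_inf N M r U k))"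

lemma coherence_profile_of_column:
  fixes B L :: real
  assumes U: "bounded_op U" "op_norm U \<le> 1"
    and r: "1 \<le> r" and M0: "M 0 = 0" and Mmono: "\<forall>k\<in>{1..<r}. M k < M (Suc k)"
    and i: "i \<in> {1..Mbig}" and Mbig: "M r \<le> Mbig"
    and cond: "coherence_condition N M m r U Mbig B L"
  obtains c where "B \<ge> L * max_weighted_coherence N m r c"
    and "\<And>k j. j \<in> {N (k-1)+1..N k} \<Longrightarrow> (cmod (U (unit_vec i) j))\<^sup>2 \<le> c k"
proof -
  have i1: "1 \<le> i" using i by simp
  have level: "(cmod (U (unit_vec i) j))\<^sup>2 \<le> mu_NM N M U k l"
    if "i \<in> {M (l-1)+1..M l}" "j \<in> {N (k-1)+1..N k}" for k l j
    using cmod_entry_sq_le_local_coherence[OF U i1 that] unfolding mu_NM_def projab_def .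
  have tail: "(cmod (U (unit_vec i) j))\<^sup>2 \<le> mu_NM_inf N M r U k"
    if "M (r-1) < i" "j \<in> {N (k-1)+1..N k}" for k j
    using cmod_entry_sq_le_local_coherence[OF U i1 _ that(2), of "- {1..M (r-1)}"] that(1)
    unfolding mu_NM_inf_def proj_perp_eq_proj projab_def by simp
  have "M (r-1) \<le> M r" using r M0 Mmono by (cases "r = 1") (auto dest: bspec[of _ _ "r-1"])
  show ?thesis
  proof (cases "i \<le> M r")
    case True
    then obtain l where l: "l \<in> {1..r}" "i \<in> {M (l-1)+1..M l}" using level_exists[of M i r] M0 i1 by auto
    show ?thesis
    proof (cases "Mbig = M r \<or> l < r")
      case True
      thus ?thesis using cond l unfolding coherence_condition_def
        by (intro that[of "\<lambda>k. mu_NM N M U k l"] level) (auto split: if_splits)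
    next
      case False
      thus ?thesis using cond l unfolding coherence_condition_def
        by (intro that[of "\<lambda>k. mu_NM_inf N M r U k"] tail) auto
    qed
  next
    case False
    hence "Mbig \<noteq> M r" using i by auto
    thus ?thesis using cond False \<open>M (r-1) \<le> M r\<close> unfolding coherence_condition_def
      by (intro that[of "\<lambda>k. mu_NM_inf N M r U k"] tail) auto
  qed
qed

lemma prob_column_event_le:
  fixes N m :: "nat \<Rightarrow> nat" and c :: "nat \<Rightarrow> real"
  assumes U: "bounded_op U" "op_norm U \<le> 1" and i: "1 \<le> i"
    and N: "strict_mono_on {0..r} N" "N 0 = 0"
    and m: "\<forall>k\<in>{1..r}. 1 \<le> m k \<and> m k \<le> N k - N (k-1)"
    and L: "0 < L" and t: "0 < t" "t \<le> 2"
    and c: "t\<^sup>2 / 4 \<ge> L * max_weighted_coherence N m r c"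
    and entries: "\<And>k j. j \<in> {N (k-1)+1..N k} \<Longrightarrow> (cmod (U (unit_vec i) j))\<^sup>2 \<le> c k"
  shows "measure_pmf.prob (ml_bernoulli N m r)
           {\<delta>. op_norm (proj {i} \<circ> adjoint U \<circ> Dop N m r \<delta> \<circ> U \<circ> proj {i}) \<ge> 1 + t} \<le> exp (- L)"
proof -
  define p where "p j = mlq N m (level_of N r j)" for j
  define a where "a j = (cmod (U (unit_vec i) j))\<^sup>2" for j
  \<comment> \<open>The maximum may vanish (e.g. under full sampling); enlarging it keeps the tail bound applicable.\<close>
  define K where "K = max (max_weighted_coherence N m r c) (t\<^sup>2 / (4 * L))"
  have K: "0 < K" "L \<le> t\<^sup>2 / (4 * K)"
    using L t c by (auto simp: K_def max_def field_simps)
  have p: "0 < p j \<and> p j \<le> 1" if "j \<in> {1..N r}" for j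
    using mlq_pos_le_one level_of_mem(1)[OF N that] m unfolding p_def by auto
  have aK: "a j * (1 / p j - 1) \<le> K" if "j \<in> {1..N r}" for j
    using weighted_entry_le_max_weighted_coherence[OF N m that entries] unfolding a_def p_def K_def by fastforce
  have "{\<delta>. op_norm (proj {i} \<circ> adjoint U \<circ> Dop N m r \<delta> \<circ> U \<circ> proj {i}) \<ge> 1 + t}
      \<subseteq> {\<delta>. 1 + t \<le> (\<Sum>j\<in>{1..N r}. if \<delta> j then a j / p j else 0)}"
    using op_norm_compression_Dop_le[OF U(1) i N] unfolding a_def p_def by (auto intro: order_trans)
  hence "measure_pmf.prob (ml_bernoulli N m r)
           {\<delta>. op_norm (proj {i} \<circ> adjoint U \<circ> Dop N m r \<delta> \<circ> U \<circ> proj {i}) \<ge> 1 + t}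
      \<le> measure_pmf.prob (Pi_pmf {1..N r} False (\<lambda>j. bernoulli_pmf (p j)))
           {\<delta>. 1 + t \<le> (\<Sum>j\<in>{1..N r}. if \<delta> j then a j / p j else 0)}"
    unfolding ml_bernoulli_def p_def by (rule measure_pmf.finite_measure_mono) simp
  also have "\<dots> \<le> exp (- (t\<^sup>2 / (4 * K)))"
    using sum_column_sq_le_one[OF U i] t
    by (intro weighted_bernoulli_sum_tail p aK K(1)) (auto simp: a_def)
  also have "\<dots> \<le> exp (- L)" using K(2) by simp
  finally show ?thesis .
qed

lemma prob_exists_le_card_mult:
  assumes "finite I" "\<And>i. i \<in> I \<Longrightarrow> measure_pmf.prob P {x. Q i x} \<le> e"
  shows "measure_pmf.prob P {x. \<exists>i\<in>I. Q i x} \<le> real (card I) * e"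
proof -
  have "{x. \<exists>i\<in>I. Q i x} = (\<Union>i\<in>I. {x. Q i x})" by blast
  hence "measure_pmf.prob P {x. \<exists>i\<in>I. Q i x} \<le> (\<Sum>i\<in>I. measure_pmf.prob P {x. Q i x})"
    using measure_pmf.finite_measure_subadditive_finite[OF assms(1)] by simp
  also have "\<dots> \<le> real (card I) * e" using sum_mono[OF assms(2)] by simp
  finally show ?thesis .
qed

lemma op_norm_compression_full_sampling_le:
  fixes N m :: "nat \<Rightarrow> nat"
  assumes U: "bounded_op U" "op_norm U \<le> 1" and i: "1 \<le> i"
    and N: "strict_mono_on {0..r} N" "N 0 = 0"
    and m: "\<forall>k\<in>{1..r}. m k = N k - N (k-1)"
  shows "op_norm (proj {i} \<circ> adjoint U \<circ> Dop N m r \<delta> \<circ> U \<circ> proj {i}) \<le> 1"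
proof -
  have "mlq N m k = 1" if "k \<in> {1..r}" for k
  proof -
    have "N (k-1) < N k" using that by (intro strict_mono_onD[OF N(1)]) auto
    hence "1 \<le> m k" "N k - N (k-1) = m k" using bspec[OF m that] by auto
    thus ?thesis unfolding mlq_def by simp
  qed
  hence "mlq N m (level_of N r j) = 1" if "j \<in> {1..N r}" for j
    using level_of_mem(1)[OF N that] by blast
  hence "(\<Sum>j\<in>{1..N r}. if \<delta> j then (cmod (U (unit_vec i) j))\<^sup>2 / mlq N m (level_of N r j) else 0)
      \<le> (\<Sum>j\<in>{1..N r}. (cmod (U (unit_vec i) j))\<^sup>2)"
    by (intro sum_mono) auto
  also have "\<dots> \<le> 1" by (rule sum_column_sq_le_one[OF U i]) simp
  finally show ?thesis using op_norm_compression_Dop_le[OF U(1) i N, of m \<delta>] by linarith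
qed

lemma prob_some_column_event_le:
  fixes N M m :: "nat \<Rightarrow> nat"
  assumes U: "bounded_op U" "op_norm U \<le> 1" and r: "1 \<le> r"
    and N: "strict_mono_on {0..r} N" "N 0 = 0"
    and m: "\<forall>k\<in>{1..r}. 1 \<le> m k \<and> m k \<le> N k - N (k-1)"
    and M0: "M 0 = 0" and Mmono: "\<forall>k\<in>{1..<r}. M k < M (Suc k)" and Mbig: "M r \<le> Mbig"
    and t: "0 < t" "t \<le> 2" and \<gamma>: "0 < \<gamma>" "\<gamma> < 1"
    and cond: "coherence_condition N M m r U Mbig (t\<^sup>2 / 4) (ln (2 * real Mbig / \<gamma>))"
    and I: "I \<subseteq> {1..Mbig}"
  shows "measure_pmf.prob (ml_bernoulli N m r)
           {\<delta>. \<exists>i\<in>I. op_norm (proj {i} \<circ> adjoint U \<circ> Dop N m r \<delta> \<circ> U \<circ> proj {i}) \<ge> 1 + t} \<le> \<gamma>"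
proof -
  have "measure_pmf.prob (ml_bernoulli N m r)
      {\<delta>. op_norm (proj {i} \<circ> adjoint U \<circ> Dop N m r \<delta> \<circ> U \<circ> proj {i}) \<ge> 1 + t} \<le> \<gamma> / (2 * real Mbig)"
    if i: "i \<in> I" for i
  proof -
    have iM: "i \<in> {1..Mbig}" using i I by auto
    obtain c where "t\<^sup>2 / 4 \<ge> ln (2 * real Mbig / \<gamma>) * max_weighted_coherence N m r c"
      and "\<And>k j. j \<in> {N (k-1)+1..N k} \<Longrightarrow> (cmod (U (unit_vec i) j))\<^sup>2 \<le> c k"
      using coherence_profile_of_column[OF U r M0 Mmono iM Mbig cond] by blast
    moreover have "1 < 2 * real Mbig / \<gamma>" using iM \<gamma> by (simp add: field_simps)
    hence "0 < ln (2 * real Mbig / \<gamma>)" by simp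
    ultimately have "measure_pmf.prob (ml_bernoulli N m r)
        {\<delta>. op_norm (proj {i} \<circ> adjoint U \<circ> Dop N m r \<delta> \<circ> U \<circ> proj {i}) \<ge> 1 + t}
        \<le> exp (- ln (2 * real Mbig / \<gamma>))"
      using iM t by (intro prob_column_event_le[OF U _ N m]) auto
    thus ?thesis using iM \<gamma> by (simp add: exp_minus)
  qed
  hence "measure_pmf.prob (ml_bernoulli N m r)
      {\<delta>. \<exists>i\<in>I. op_norm (proj {i} \<circ> adjoint U \<circ> Dop N m r \<delta> \<circ> U \<circ> proj {i}) \<ge> 1 + t}
      \<le> real (card I) * (\<gamma> / (2 * real Mbig))"
    using finite_subset[OF I] by (intro prob_exists_le_card_mult) auto
  also have "\<dots> \<le> real Mbig * (\<gamma> / (2 * real Mbig))"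
    using card_mono[OF _ I] \<gamma> by (intro mult_right_mono) auto
  also have "\<dots> \<le> \<gamma>" using \<gamma> by (cases "Mbig = 0") auto
  finally show ?thesis .
qed

theorem proposition7p13:
  fixes U :: op and r :: nat and N M m s :: "nat \<Rightarrow> nat"
    and \<Delta> :: "nat \<Rightarrow> nat set" and Mbig :: nat and t \<gamma> :: real
  assumes U: "bounded_op U" "op_norm U \<le> 1"
    and r: "1 \<le> r"
    and N0: "N 0 = 0" and N1: "1 \<le> N 1" and Nmono: "\<forall>k\<in>{1..<r}. N k < N (Suc k)"
    and M0: "M 0 = 0" and Mmono: "\<forall>k\<in>{1..<r}. M k < M (Suc k)"
    and m: "\<forall>k\<in>{1..r}. 1 \<le> m k \<and> m k \<le> N k - N (k-1)"
    and Delta: "\<forall>k\<in>{1..r}. \<Delta> k \<subseteq> {M (k-1)+1..M k} \<and> card (\<Delta> k) = s k"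
    and Mbig: "M r \<le> Mbig"
    and t: "0 < t" "t < 1"
    and \<gamma>: "0 < \<gamma>" "\<gamma> < 1"
  shows
   "((if Mbig = M r then
        (\<forall>l\<in>{1..r}. t\<^sup>2 / 4 \<ge> ln (2 * real Mbig / \<gamma>) *
            Max ((\<lambda>k. (real (N k - N (k-1)) / real (m k) - 1) * mu_NM N M U k l) ` {1..r}))
      else
        (\<forall>l\<in>{1..<r}. t\<^sup>2 / 4 \<ge> ln (2 * real Mbig / \<gamma>) *
            Max ((\<lambda>k. (real (N k - N (k-1)) / real (m k) - 1) * mu_NM N M U k l) ` {1..r})) \<and>
        t\<^sup>2 / 4 \<ge> ln (2 * real Mbig / \<gamma>) *
            Max ((\<lambda>k. (real (N k - N (k-1)) / real (m k) - 1) * mu_NM_inf N M r U k) ` {1..r}))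
     \<longrightarrow>
      measure_pmf.prob (ml_bernoulli N m r)
        {\<delta>. \<exists>i \<in> {1..Mbig} - (\<Union>k\<in>{1..r}. \<Delta> k).
            op_norm (proj {i} \<circ> adjoint U \<circ> Dop N m r \<delta> \<circ> U \<circ> proj {i}) \<ge> 1 + t}
      \<le> \<gamma>)
    \<and>
    ((\<forall>k\<in>{1..r}. m k = N k - N (k-1)) \<longrightarrow>
      (\<forall>i\<ge>1. measure_pmf.prob (ml_bernoulli N m r)
        {\<delta>. op_norm (proj {i} \<circ> adjoint U \<circ> Dop N m r \<delta> \<circ> U \<circ> proj {i}) \<ge> 1 + t} = 0))"
proof -
  have N: "strict_mono_on {0..r} N" using strict_mono_on_levels[OF N0 N1 Nmono] .
  show ?thesis (is "(?cond \<longrightarrow> _) \<and> _")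
  proof (intro conjI impI allI)
    assume ?cond
    hence "coherence_condition N M m r U Mbig (t\<^sup>2 / 4) (ln (2 * real Mbig / \<gamma>))"
      unfolding coherence_condition_def max_weighted_coherence_def .
    thus "measure_pmf.prob (ml_bernoulli N m r)
        {\<delta>. \<exists>i \<in> {1..Mbig} - (\<Union>k\<in>{1..r}. \<Delta> k).
            op_norm (proj {i} \<circ> adjoint U \<circ> Dop N m r \<delta> \<circ> U \<circ> proj {i}) \<ge> 1 + t} \<le> \<gamma>"
      using t \<gamma> by (intro prob_some_column_event_le[OF U r N N0 m M0 Mmono Mbig]) auto
  next
    fix i :: nat
    assume full: "\<forall>k\<in>{1..r}. m k = N k - N (k-1)" and i: "1 \<le> i"
    have "op_norm (proj {i} \<circ> adjoint U \<circ> Dop N m r \<delta> \<circ> U \<circ> proj {i}) < 1 + t" for \<delta>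
      using op_norm_compression_full_sampling_le[OF U i N N0 full, of \<delta>] t by linarith
    thus "measure_pmf.prob (ml_bernoulli N m r)
        {\<delta>. op_norm (proj {i} \<circ> adjoint U \<circ> Dop N m r \<delta> \<circ> U \<circ> proj {i}) \<ge> 1 + t} = 0"
      by (simp add: not_le[symmetric])
  qed
qed

end
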